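(* Let $C_0\ge1$. There exists a constant $C_1=C_1(C_0)\ge1$ such that for all $x_1,x_2>0$ and $\kappa_1,\kappa_2\in(0,1)$ satisfying $$\frac{x_1}{x_2},\ \frac{\kappa_1}{\kappa_2},\ \frac{1-\kappa_1}{1-\kappa_2}\in\Big[\frac1{C_0},C_0\Big],$$ we have $$\frac1{C_1}\le\frac{H_{\kappa_1}(x_1)-1}{H_{\kappa_2}(x_2)-1}\le C_1.$$
   Context: For $\kappa\in(0,1)$ let $G_\kappa:[1,\infty)\to[0,\infty)$, $G_\kappa(x)=\sqrt{x^2-1}-\kappa\ln(x+\sqrt{x^2-1})$ (a strictly increasing bijection) and $H_\kappa=G_\kappa^{-1}:[0,\infty)\to[1,\infty)$. *)

theory Defs
  imports "HOL-Analysis.Analysis"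
begin

definition G :: "real \<Rightarrow> real \<Rightarrow> real" where
  "G \<kappa> x = sqrt (x\<^sup>2 - 1) - \<kappa> * ln (x + sqrt (x\<^sup>2 - 1))"

definition H :: "real \<Rightarrow> real \<Rightarrow> real" where
  "H \<kappa> y = (THE x. x \<ge> 1 \<and> G \<kappa> x = y)"

end

theory Submission
  imports Defs
begin

text \<open>
  On \<open>[1, \<infinity>)\<close> substitute \<open>x = cosh t\<close> with \<open>t \<ge> 0\<close>: then \<open>G\<^sub>\<kappa>(x) = sinh t - \<kappa> t\<close>,
  so \<open>H\<^sub>\<kappa>(y) = cosh t\<close> where \<open>t\<close> solves \<open>sinh t - \<kappa> t = y\<close>.
  If \<open>y\<^sub>1 \<le> C y\<^sub>2\<close> and \<open>1 - \<kappa>\<^sub>2 \<le> C (1 - \<kappa>\<^sub>1)\<close>, then replacing \<open>\<kappa>\<^sub>1\<close> by \<open>\<kappa>\<^sub>2\<close> costs at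
  most another factor \<open>C\<close>, so \<open>sinh t\<^sub>1 - \<kappa>\<^sub>2 t\<^sub>1 \<le> C\<^sup>2 (sinh t\<^sub>2 - \<kappa>\<^sub>2 t\<^sub>2)\<close>.
  Since \<open>t \<mapsto> sinh t - \<kappa> t\<close> is increasing, superlinear and grows exponentially,
  this forces both \<open>t\<^sub>1 \<le> C\<^sup>2 t\<^sub>2\<close> and \<open>t\<^sub>1 \<le> t\<^sub>2 + C\<^sup>2\<close>. The first bound controls
  \<open>cosh t - 1 \<approx> t\<^sup>2/2\<close> for small \<open>t\<^sub>2\<close>, the second controls \<open>cosh t \<approx> e\<^sup>t/2\<close> for large \<open>t\<^sub>2\<close>.
\<close>

lemma sinh_diff_ge_diff:
  fixes a b :: real
  assumes "0 \<le> a" "a \<le> b"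
  shows "b - a \<le> sinh b - sinh a"
proof -
  have "(\<lambda>t. sinh t - t) a \<le> (\<lambda>t. sinh t - t) b"
    by (rule DERIV_nonneg_imp_nondecreasing[OF assms(2)])
       (auto intro!: derivative_eq_intros simp: cosh_real_ge_1)
  thus ?thesis by simp
qed

lemma sinh_ge_self: "0 \<le> t \<Longrightarrow> t \<le> sinh (t::real)"
  using sinh_diff_ge_diff[of 0 t] by simp

lemma cosh_ge_self: "0 \<le> t \<Longrightarrow> t \<le> cosh (t::real)"
  using sinh_ge_self[of t] sinh_le_cosh_real[of t] by linarith

lemma sinh_le_mult_cosh:
  fixes t :: real
  assumes "0 \<le> t"
  shows "sinh t \<le> t * cosh t"
proof -
  have "(\<lambda>s. s * cosh s - sinh s) 0 \<le> (\<lambda>s. s * cosh s - sinh s) t"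
  proof (rule DERIV_nonneg_imp_nondecreasing[OF assms])
    fix s :: real assume "0 \<le> s"
    hence "DERIV (\<lambda>s. s * cosh s - sinh s) s :> s * sinh s \<and> 0 \<le> s * sinh s"
      by (auto intro!: derivative_eq_intros simp: algebra_simps)
    thus "\<exists>d. DERIV (\<lambda>s. s * cosh s - sinh s) s :> d \<and> 0 \<le> d" by blast
  qed
  thus ?thesis by simp
qed

lemma sinh_mult_ge:
  fixes l t :: real
  assumes "1 \<le> l" "0 \<le> t"
  shows "l * sinh t \<le> sinh (l * t)"
proof -
  have "(\<lambda>s. sinh (l * s) - l * sinh s) 0 \<le> (\<lambda>s. sinh (l * s) - l * sinh s) t"
  proof (rule DERIV_nonneg_imp_nondecreasing[OF assms(2)])
    fix s :: real assume "0 \<le> s"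
    hence "cosh s \<le> cosh (l * s)"
      using assms by (subst cosh_real_nonneg_le_iff) (auto intro: mult_right_mono[of 1 l s, simplified])
    hence "0 \<le> cosh (l * s) * l - l * cosh s"
      using assms by (simp add: algebra_simps mult_left_mono)
    moreover have "DERIV (\<lambda>s. sinh (l * s) - l * sinh s) s :> cosh (l * s) * l - l * cosh s"
      by (auto intro!: derivative_eq_intros)
    ultimately show "\<exists>d. DERIV (\<lambda>s. sinh (l * s) - l * sinh s) s :> d \<and> 0 \<le> d" by blast
  qed
  thus ?thesis by simp
qed

lemma sinh_mult_le:
  fixes l a :: real
  assumes "1 \<le> l" "0 \<le> a" "a \<le> 1"
  shows "sinh (l * a) \<le> l * cosh l * sinh a"
proof -
  have "cosh (l * a) \<le> cosh l"
    using assms by (subst cosh_real_nonneg_le_iff) (auto simp: mult_left_le)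
  have "sinh (l * a) \<le> l * a * cosh (l * a)"
    using sinh_le_mult_cosh[of "l * a"] assms by simp
  also have "\<dots> \<le> l * a * cosh l"
    using \<open>cosh (l * a) \<le> cosh l\<close> assms by (intro mult_left_mono) auto
  also have "\<dots> \<le> l * cosh l * sinh a"
    using sinh_ge_self[of a] assms by (simp add: mult.assoc mult.left_commute mult_left_mono)
  finally show ?thesis .
qed

lemma cosh_add_le_exp_mult:
  fixes t l :: real
  assumes "0 \<le> l"
  shows "cosh (t + l) \<le> exp l * cosh t"
proof -
  have "cosh (t + l) = cosh t * cosh l + sinh t * sinh l" by (rule cosh_add)
  also have "\<dots> \<le> cosh t * cosh l + cosh t * sinh l"
    using sinh_le_cosh_real[of t] assms by (intro add_left_mono mult_right_mono) auto
  also have "\<dots> = exp l * cosh t" by (simp add: algebra_simps flip: cosh_plus_sinh)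
  finally show ?thesis .
qed

lemma cosh_minus_one_eq: "cosh (t::real) - 1 = 2 * (sinh (t / 2))\<^sup>2"
proof -
  have "cosh t = cosh (2 * (t / 2))" by simp
  also have "\<dots> = (cosh (t / 2))\<^sup>2 + (sinh (t / 2))\<^sup>2" by (rule cosh_double)
  finally show ?thesis using cosh_square_eq[of "t / 2"] by simp
qed

definition cosh_ratio_bound :: "real \<Rightarrow> real" where
  "cosh_ratio_bound l = l\<^sup>2 * (cosh l)\<^sup>2 + 2 * exp l"

lemma cosh_ratio_bound_ge_1: "0 \<le> l \<Longrightarrow> 1 \<le> cosh_ratio_bound l"
  unfolding cosh_ratio_bound_def
  by (smt (verit) one_le_exp_iff zero_le_power2 mult_nonneg_nonneg)

lemma cosh_minus_one_le:
  fixes l s t :: real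
  assumes "1 \<le> l" "0 \<le> s" "0 \<le> t" "s \<le> l * t" "s \<le> t + l"
  shows "cosh s - 1 \<le> cosh_ratio_bound l * (cosh t - 1)"
proof (cases "t \<le> 2")
  case True
  have "sinh (s / 2) \<le> sinh (l * (t / 2))"
    using assms by simp
  also have "\<dots> \<le> l * cosh l * sinh (t / 2)"
    using True assms by (intro sinh_mult_le) auto
  finally have "(sinh (s / 2))\<^sup>2 \<le> (l * cosh l * sinh (t / 2))\<^sup>2"
    using assms by (intro power_mono) auto
  hence "cosh s - 1 \<le> l\<^sup>2 * (cosh l)\<^sup>2 * (cosh t - 1)"
    by (simp add: cosh_minus_one_eq power_mult_distrib)
  also have "\<dots> \<le> cosh_ratio_bound l * (cosh t - 1)"
    using cosh_real_ge_1[of t] unfolding cosh_ratio_bound_def by (intro mult_right_mono) auto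
  finally show ?thesis .
next
  case False
  hence "2 \<le> cosh t" using cosh_ge_self[of t] by simp
  have "cosh s \<le> cosh (t + l)" using assms by (subst cosh_real_nonneg_le_iff) auto
  also have "\<dots> \<le> exp l * cosh t" using assms by (intro cosh_add_le_exp_mult) auto
  also have "\<dots> \<le> 2 * exp l * (cosh t - 1)" using \<open>2 \<le> cosh t\<close> by (simp add: algebra_simps)
  finally have "cosh s - 1 \<le> 2 * exp l * (cosh t - 1)" by simp
  also have "\<dots> \<le> cosh_ratio_bound l * (cosh t - 1)"
    using \<open>2 \<le> cosh t\<close> unfolding cosh_ratio_bound_def by (intro mult_right_mono) auto
  finally show ?thesis .
qed

definition G_hyp :: "real \<Rightarrow> real \<Rightarrow> real" where
  "G_hyp \<kappa> t = sinh t - \<kappa> * t"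

lemma G_hyp_strict_mono:
  fixes \<kappa> a b :: real
  assumes "\<kappa> < 1" "0 \<le> a" "a < b"
  shows "G_hyp \<kappa> a < G_hyp \<kappa> b"
proof -
  have "b - a \<le> sinh b - sinh a" using sinh_diff_ge_diff assms by simp
  moreover have "\<kappa> * (b - a) < b - a" using assms by simp
  ultimately show ?thesis unfolding G_hyp_def by (simp add: algebra_simps)
qed

lemma G_hyp_ge: "0 \<le> t \<Longrightarrow> (1 - \<kappa>) * t \<le> G_hyp \<kappa> t"
  using sinh_ge_self[of t] by (simp add: G_hyp_def algebra_simps)

lemma G_hyp_mult_ge: "1 \<le> l \<Longrightarrow> 0 \<le> t \<Longrightarrow> l * G_hyp \<kappa> t \<le> G_hyp \<kappa> (l * t)"
  using sinh_mult_ge[of l t] by (simp add: G_hyp_def algebra_simps)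

lemma G_hyp_add_ge:
  fixes \<kappa> l t :: real
  assumes "0 \<le> \<kappa>" "\<kappa> \<le> 1" "1 \<le> l" "0 \<le> t"
  shows "l * G_hyp \<kappa> t \<le> G_hyp \<kappa> (t + l)"
proof -
  have "l * sinh t \<le> sinh t * cosh l"
    using cosh_ge_self[of l] assms by (simp add: mult_right_mono mult.commute)
  moreover have "l \<le> cosh t * sinh l"
    using sinh_ge_self[of l] cosh_real_ge_1[of t] assms mult_mono[of 1 "cosh t" l "sinh l"] by simp
  moreover have "0 \<le> \<kappa> * t * (l - 1)" "0 \<le> l * (1 - \<kappa>)" using assms by simp_all
  ultimately show ?thesis by (simp add: G_hyp_def sinh_add algebra_simps)
qed

lemma G_hyp_change_kappa:
  fixes \<kappa>\<^sub>1 \<kappa>\<^sub>2 C t :: real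
  assumes "1 \<le> C" "1 - \<kappa>\<^sub>2 \<le> C * (1 - \<kappa>\<^sub>1)" "0 \<le> t"
  shows "G_hyp \<kappa>\<^sub>2 t \<le> C * G_hyp \<kappa>\<^sub>1 t"
proof -
  have "0 \<le> sinh t - t" using sinh_ge_self[OF assms(3)] by simp
  have "G_hyp \<kappa>\<^sub>2 t = (1 - \<kappa>\<^sub>2) * t + (sinh t - t)" by (simp add: G_hyp_def algebra_simps)
  also have "\<dots> \<le> C * (1 - \<kappa>\<^sub>1) * t + C * (sinh t - t)"
    using assms \<open>0 \<le> sinh t - t\<close> by (intro add_mono mult_right_mono) (auto intro: mult_right_mono[of 1 C, simplified])
  also have "\<dots> = C * G_hyp \<kappa>\<^sub>1 t" by (simp add: G_hyp_def algebra_simps)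
  finally show ?thesis .
qed

lemma G_hyp_le_scaled_imp:
  fixes \<kappa> l s t :: real
  assumes "0 \<le> \<kappa>" "\<kappa> < 1" "1 \<le> l" "0 \<le> s" "0 \<le> t"
    and "G_hyp \<kappa> s \<le> l * G_hyp \<kappa> t"
  shows "s \<le> l * t" and "s \<le> t + l"
proof -
  show "s \<le> l * t"
  proof (rule ccontr)
    assume "\<not> s \<le> l * t"
    hence "G_hyp \<kappa> (l * t) < G_hyp \<kappa> s" using assms by (intro G_hyp_strict_mono) auto
    thus False using G_hyp_mult_ge[of l t \<kappa>] assms by linarith
  qed
  show "s \<le> t + l"
  proof (rule ccontr)
    assume "\<not> s \<le> t + l"
    hence "G_hyp \<kappa> (t + l) < G_hyp \<kappa> s" using assms by (intro G_hyp_strict_mono) auto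
    thus False using G_hyp_add_ge[of \<kappa> l t] assms by linarith
  qed
qed

lemma G_cosh: "0 \<le> t \<Longrightarrow> G \<kappa> (cosh t) = G_hyp \<kappa> t"
  using sinh_arcosh_real[of "cosh t"] arcosh_real_def[of "cosh t"]
  by (simp add: G_def G_hyp_def cosh_real_ge_1 arcosh_cosh_real)

lemma H_G_hyp:
  fixes \<kappa> t :: real
  assumes "\<kappa> < 1" "0 \<le> t"
  shows "H \<kappa> (G_hyp \<kappa> t) = cosh t"
  unfolding H_def
proof (rule the_equality)
  show "1 \<le> cosh t \<and> G \<kappa> (cosh t) = G_hyp \<kappa> t"
    using assms G_cosh cosh_real_ge_1 by auto
next
  fix x assume x: "1 \<le> x \<and> G \<kappa> x = G_hyp \<kappa> t"
  define s where "s = arcosh x"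
  have "0 \<le> s" "x = cosh s" using x s_def by simp_all
  hence "G_hyp \<kappa> s = G_hyp \<kappa> t" using x G_cosh by simp
  hence "s = t"
    using G_hyp_strict_mono[OF assms(1) \<open>0 \<le> s\<close>, of t] G_hyp_strict_mono[OF assms, of s]
    by (cases s t rule: linorder_cases) auto
  thus "x = cosh t" using \<open>x = cosh s\<close> by simp
qed

lemma G_hyp_surj:
  fixes \<kappa> y :: real
  assumes "\<kappa> < 1" "0 \<le> y"
  obtains t where "0 \<le> t" "G_hyp \<kappa> t = y"
proof -
  define b where "b = y / (1 - \<kappa>)"
  have "0 \<le> b" using assms b_def by simp
  have "G_hyp \<kappa> 0 \<le> y" "y \<le> G_hyp \<kappa> b"
    using assms G_hyp_ge[OF \<open>0 \<le> b\<close>, of \<kappa>] by (simp_all add: G_hyp_def b_def)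
  moreover have "\<forall>s. 0 \<le> s \<and> s \<le> b \<longrightarrow> isCont (G_hyp \<kappa>) s"
    unfolding G_hyp_def by (auto intro!: continuous_intros)
  ultimately show ?thesis using IVT[of "G_hyp \<kappa>" 0 y b] \<open>0 \<le> b\<close> that by auto
qed

lemma H_sub_one_pos:
  fixes \<kappa> y :: real
  assumes "\<kappa> < 1" "0 < y"
  shows "0 < H \<kappa> y - 1"
proof -
  obtain t where t: "0 \<le> t" "G_hyp \<kappa> t = y" using G_hyp_surj assms by (metis less_imp_le)
  hence "t \<noteq> 0" using assms by (auto simp: G_hyp_def)
  hence "1 < cosh t" using cosh_real_ge_1[of t] cosh_real_one_iff[of t] by linarith
  thus ?thesis using H_G_hyp[OF assms(1) t(1)] t(2) by simp
qed

lemma H_sub_one_le: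
  fixes \<kappa>\<^sub>1 \<kappa>\<^sub>2 y\<^sub>1 y\<^sub>2 C :: real
  assumes "\<kappa>\<^sub>1 < 1" "0 \<le> \<kappa>\<^sub>2" "\<kappa>\<^sub>2 < 1" "0 \<le> y\<^sub>1" "0 \<le> y\<^sub>2" "1 \<le> C"
    and "y\<^sub>1 \<le> C * y\<^sub>2" "1 - \<kappa>\<^sub>2 \<le> C * (1 - \<kappa>\<^sub>1)"
  shows "H \<kappa>\<^sub>1 y\<^sub>1 - 1 \<le> cosh_ratio_bound (C\<^sup>2) * (H \<kappa>\<^sub>2 y\<^sub>2 - 1)"
proof -
  obtain t\<^sub>1 where t\<^sub>1: "0 \<le> t\<^sub>1" "G_hyp \<kappa>\<^sub>1 t\<^sub>1 = y\<^sub>1" using G_hyp_surj assms by metis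
  obtain t\<^sub>2 where t\<^sub>2: "0 \<le> t\<^sub>2" "G_hyp \<kappa>\<^sub>2 t\<^sub>2 = y\<^sub>2" using G_hyp_surj assms by metis
  have "G_hyp \<kappa>\<^sub>2 t\<^sub>1 \<le> C * G_hyp \<kappa>\<^sub>1 t\<^sub>1" using assms t\<^sub>1 by (intro G_hyp_change_kappa)
  also have "\<dots> \<le> C * (C * G_hyp \<kappa>\<^sub>2 t\<^sub>2)" using assms t\<^sub>1 t\<^sub>2 by simp
  finally have "G_hyp \<kappa>\<^sub>2 t\<^sub>1 \<le> C\<^sup>2 * G_hyp \<kappa>\<^sub>2 t\<^sub>2" by (simp add: power2_eq_square)
  moreover have "1 \<le> C\<^sup>2" using assms by (simp add: one_le_power)
  ultimately have "t\<^sub>1 \<le> C\<^sup>2 * t\<^sub>2" "t\<^sub>1 \<le> t\<^sub>2 + C\<^sup>2"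
    using G_hyp_le_scaled_imp[of \<kappa>\<^sub>2 "C\<^sup>2" t\<^sub>1 t\<^sub>2] assms t\<^sub>1 t\<^sub>2 by auto
  hence "cosh t\<^sub>1 - 1 \<le> cosh_ratio_bound (C\<^sup>2) * (cosh t\<^sub>2 - 1)"
    using \<open>1 \<le> C\<^sup>2\<close> t\<^sub>1 t\<^sub>2 by (intro cosh_minus_one_le)
  thus ?thesis using H_G_hyp assms t\<^sub>1 t\<^sub>2 by metis
qed

lemma divide_mem_reciprocal_interval:
  fixes a b C :: real
  assumes "0 < a" "0 < b" "a / b \<in> {1/C..C}"
  shows "a \<le> C * b" "b \<le> C * a"
proof -
  have "0 < C" using assms by (smt (verit) atLeastAtMost_iff divide_pos_pos)
  thus "a \<le> C * b" "b \<le> C * a" using assms by (auto simp: field_simps)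
qed

theorem lemma2p11:
  fixes C0 :: real
  assumes "C0 \<ge> 1"
  shows "\<exists>C1::real. C1 \<ge> 1 \<and>
    (\<forall>x1 x2 \<kappa>1 \<kappa>2. x1 > 0 \<longrightarrow> x2 > 0 \<longrightarrow>
       0 < \<kappa>1 \<longrightarrow> \<kappa>1 < 1 \<longrightarrow> 0 < \<kappa>2 \<longrightarrow> \<kappa>2 < 1 \<longrightarrow>
       x1 / x2 \<in> {1/C0..C0} \<longrightarrow> \<kappa>1 / \<kappa>2 \<in> {1/C0..C0} \<longrightarrow>
       (1 - \<kappa>1) / (1 - \<kappa>2) \<in> {1/C0..C0} \<longrightarrow>
       1 / C1 \<le> (H \<kappa>1 x1 - 1) / (H \<kappa>2 x2 - 1) \<and>
       (H \<kappa>1 x1 - 1) / (H \<kappa>2 x2 - 1) \<le> C1)"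
proof (intro exI[of _ "cosh_ratio_bound (C0\<^sup>2)"] conjI allI impI)
  let ?K = "cosh_ratio_bound (C0\<^sup>2)"
  show "1 \<le> ?K" by (simp add: cosh_ratio_bound_ge_1)
  fix x1 x2 \<kappa>1 \<kappa>2 :: real
  assume x: "x1 > 0" "x2 > 0" and \<kappa>: "0 < \<kappa>1" "\<kappa>1 < 1" "0 < \<kappa>2" "\<kappa>2 < 1"
    and "x1 / x2 \<in> {1/C0..C0}" "\<kappa>1 / \<kappa>2 \<in> {1/C0..C0}" "(1 - \<kappa>1) / (1 - \<kappa>2) \<in> {1/C0..C0}"
  hence "x1 \<le> C0 * x2" "x2 \<le> C0 * x1" "1 - \<kappa>1 \<le> C0 * (1 - \<kappa>2)" "1 - \<kappa>2 \<le> C0 * (1 - \<kappa>1)"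
    using divide_mem_reciprocal_interval by auto
  hence "H \<kappa>1 x1 - 1 \<le> ?K * (H \<kappa>2 x2 - 1)" "H \<kappa>2 x2 - 1 \<le> ?K * (H \<kappa>1 x1 - 1)"
    using assms x \<kappa> by (auto intro!: H_sub_one_le)
  moreover have "0 < H \<kappa>2 x2 - 1" "0 < ?K"
    using H_sub_one_pos x \<kappa> \<open>1 \<le> ?K\<close> by auto
  ultimately show "(H \<kappa>1 x1 - 1) / (H \<kappa>2 x2 - 1) \<le> ?K"
    and "1 / ?K \<le> (H \<kappa>1 x1 - 1) / (H \<kappa>2 x2 - 1)"
    by (simp_all add: divide_le_eq le_divide_eq mult.commute)
qed

end
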